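(* Assume the setting in the context (Condition ASM), let $\widehat\beta$ be a LASSO solution, $\widehat T=\mathrm{support}(\widehat\beta)$, $\zeta:=\max_{1\leqslant j\leqslant p}|\widehat\beta_j-\beta_{0j}|$, and $\widehat m=|\widehat T\setminus T|$. Fix $c>1$, $\bar c=(c+1)/(c-1)$. (1) If $\min_{j\in T}|\beta_{0j}|>\zeta+t$ for some $t\geqslant\zeta$, then $T\subseteq\widehat T$ and moreover $T=\{j\in\{1,\dots,p\}:|\widehat\beta_j|>t\}$. (2) If $\lambda\geqslant c\,n\|S\|_\infty$, then $$\zeta\leqslant\Big(1+\frac1c\Big)\frac{\lambda\sqrt s}{n\,\kappa_{\bar c}\,\kappa(\widehat m)}+\frac{2c_s}{\kappa(\widehat m)}.$$ (3) If $\lambda\geqslant c\,n\|S\|_\infty$ and there is a constant $U>5\bar c$ such that $|\mathbb{E}_n[x_{ij}x_{ik}]|\leqslant 1/(Us)$ for all $1\leqslant j<k\leqslant p$, then $$\zeta\leqslant\frac{\lambda}{n}\cdot\frac{U+\bar c}{U-5\bar c}+\min\Big\{\frac{\sigma}{\sqrt n},c_s\Big\}+\frac{6\bar c}{U-5\bar c}\frac{c_s}{\sqrt s}+\frac{4\bar c}{U}\frac{n}{\lambda}\frac{c_s^2}{s}.$$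
   Context: Condition ASM: observations $(y_i,z_i)$, $i=1,\dots,n$, $z_i$ fixed, $y_i=f(z_i)+\varepsilon_i$ with $\varepsilon_i$ i.i.d. $N(0,\sigma^2)$. $f_i=f(z_i)$, $\mathbb{E}_n[a_i]=n^{-1}\sum_i a_i$, $x_i=P(z_i)\in\mathbb{R}^p$ (including a constant) normalized so $\mathbb{E}_n[x_{ij}^2]=1$. $\beta_0$ is any solution of $\min_\beta\mathbb{E}_n[(f_i-x_i'\beta)^2]+\sigma^2\|\beta\|_0/n$ ($\|\cdot\|_0$ = number of nonzeros); $s=\|\beta_0\|_0$, $T=\mathrm{support}(\beta_0)$, $r_i=f_i-x_i'\beta_0$, $c_s=\sqrt{\mathbb{E}_n[r_i^2]}\leqslant K\sigma\sqrt{s/n}$ for an absolute constant $K$. $\|\delta\|_{2,n}=\sqrt{\mathbb{E}_n[(x_i'\delta)^2]}$; $S=2\mathbb{E}_n[x_i\varepsilon_i]$; LASSO: $\widehat\beta\in\arg\min_\beta\mathbb{E}_n[(y_i-x_i'\beta)^2]+\frac\lambda n\|\beta\|_1$, $\lambda>0$. $\delta_A$ is $\delta$ with entries outside $A$ set to zero. Restricted eigenvalue: $\kappa_C=\min\{\sqrt s\|\delta\|_{2,n}/\|\delta_T\|_1:\|\delta_{T^c}\|_1\leqslant C\|\delta_T\|_1,\ \delta_T\neq0\}$. Minimal sparse eigenvalue: $\kappa(m)^2=\min\{\|\delta\|_{2,n}^2/\|\delta\|^2:\delta\neq0,\|\delta_{T^c}\|_0\leqslant m\}$. *)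

theory Defs
  imports "HOL-Analysis.Analysis"
begin

definition En :: "nat \<Rightarrow> (nat \<Rightarrow> real) \<Rightarrow> real" where
  "En n a = (\<Sum>i<n. a i) / real n"

text \<open>Regressor vectors live in real^'p (p = CARD('p)).\<close>
definition supp :: "real^'p \<Rightarrow> 'p set" where
  "supp b = {j. b $ j \<noteq> 0}"

definition l0 :: "real^'p \<Rightarrow> nat" where
  "l0 b = card (supp b)"

definition l1 :: "real^'p \<Rightarrow> real" where
  "l1 b = (\<Sum>j\<in>UNIV. \<bar>b $ j\<bar>)"

definition linf :: "real^'p \<Rightarrow> real" where
  "linf b = Max (range (\<lambda>j. \<bar>b $ j\<bar>))"

definition restr :: "'p set \<Rightarrow> real^'p \<Rightarrow> real^'p" where
  "restr A d = (\<chi> j. if j \<in> A then d $ j else 0)"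

definition norm2n :: "nat \<Rightarrow> (nat \<Rightarrow> real^'p) \<Rightarrow> real^'p \<Rightarrow> real" where
  "norm2n n x d = sqrt (En n (\<lambda>i. (x i \<bullet> d)\<^sup>2))"

definition oracsol :: "nat \<Rightarrow> (nat \<Rightarrow> real^'p) \<Rightarrow> (nat \<Rightarrow> real) \<Rightarrow> real \<Rightarrow> real^'p \<Rightarrow> bool" where
  "oracsol n x f \<sigma> b0 \<longleftrightarrow>
     (\<forall>b. En n (\<lambda>i. (f i - x i \<bullet> b0)\<^sup>2) + \<sigma>\<^sup>2 * real (l0 b0) / real n
          \<le> En n (\<lambda>i. (f i - x i \<bullet> b)\<^sup>2) + \<sigma>\<^sup>2 * real (l0 b) / real n)"

definition lasso_sol :: "nat \<Rightarrow> (nat \<Rightarrow> real^'p) \<Rightarrow> (nat \<Rightarrow> real) \<Rightarrow> real \<Rightarrow> real^'p \<Rightarrow> bool" where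
  "lasso_sol n x y lam bh \<longleftrightarrow>
     (\<forall>b. En n (\<lambda>i. (y i - x i \<bullet> bh)\<^sup>2) + lam / real n * l1 bh
          \<le> En n (\<lambda>i. (y i - x i \<bullet> b)\<^sup>2) + lam / real n * l1 b)"

text \<open>Restricted eigenvalue kappa_C (the minimum is attained, so Inf = min).\<close>
definition RE :: "nat \<Rightarrow> (nat \<Rightarrow> real^'p) \<Rightarrow> 'p set \<Rightarrow> real \<Rightarrow> real" where
  "RE n x T C = Inf {sqrt (real (card T)) * norm2n n x d / l1 (restr T d) | d.
      l1 (restr (- T) d) \<le> C * l1 (restr T d) \<and> restr T d \<noteq> 0}"

definition SE :: "nat \<Rightarrow> (nat \<Rightarrow> real^'p) \<Rightarrow> 'p set \<Rightarrow> nat \<Rightarrow> real" where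
  "SE n x T m = sqrt (Inf {(norm2n n x d)\<^sup>2 / (norm d)\<^sup>2 | d.
      d \<noteq> 0 \<and> l0 (restr (- T) d) \<le> m})"

end

theory Submission
  imports Defs
begin

(* Everything comes from optimality conditions. Comparing the LASSO objective at bh and
   at b0 gives the basic inequality; moving a single coordinate of bh gives the KKT bound
   |E_n[x_ij (y_i - x_i'bh)]| <= lam/(2n), and moving a single coordinate of b0 bounds the
   correlation of each regressor with the approximation error by min(sigma/sqrt n, c_s).
   For lam >= c n |S|_inf the basic inequality confines delta = bh - b0, up to a c_s-term,
   to the cone |delta_{T^c}|_1 <= cb |delta_T|_1, on which the restricted eigenvalue bounds
   |delta|_{2,n}; the sparse eigenvalue then bounds |delta|_2 >= zeta. Under coherence the
   Gram matrix differs from the identity by at most 1/(Us) per entry, so the KKT bound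
   determines each coordinate of delta up to |delta|_1/(Us), and |delta|_1 is controlled by
   playing the cone inequality against the coherence lower bound on |delta|_{2,n}. Part (1)
   is plain thresholding. *)

section \<open>Empirical means and vector norms\<close>

lemma En_add: "En n (\<lambda>i. a i + b i) = En n a + En n b"
  by (simp add: En_def sum.distrib add_divide_distrib)

lemma En_diff: "En n (\<lambda>i. a i - b i) = En n a - En n b"
  by (simp add: En_def sum_subtractf diff_divide_distrib)

lemma En_cmult: "En n (\<lambda>i. c * a i) = c * En n a"
  by (simp add: En_def sum_distrib_left)

lemma En_sum: "finite A \<Longrightarrow> En n (\<lambda>i. \<Sum>j\<in>A. g j i) = (\<Sum>j\<in>A. En n (g j))"
  by (simp add: En_def sum.swap[of _ A] sum_divide_distrib)

lemma En_cong: "(\<And>i. i < n \<Longrightarrow> a i = b i) \<Longrightarrow> En n a = En n b"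
  by (simp add: En_def)

lemma En_nonneg: "(\<And>i. a i \<ge> 0) \<Longrightarrow> En n a \<ge> 0"
  by (simp add: En_def sum_nonneg)

lemma En_cauchy_schwarz:
  "En n (\<lambda>i. a i * b i) \<le> sqrt (En n (\<lambda>i. (a i)\<^sup>2)) * sqrt (En n (\<lambda>i. (b i)\<^sup>2))"
proof -
  have "(\<Sum>i<n. a i * b i)\<^sup>2 \<le> (\<Sum>i<n. (a i)\<^sup>2) * (\<Sum>i<n. (b i)\<^sup>2)"
    by (rule Cauchy_Schwarz_ineq_sum)
  then have "(\<Sum>i<n. a i * b i) \<le> sqrt ((\<Sum>i<n. (a i)\<^sup>2) * (\<Sum>i<n. (b i)\<^sup>2))"
    using real_le_rsqrt by blast
  then have "(\<Sum>i<n. a i * b i) / real n \<le> sqrt ((\<Sum>i<n. (a i)\<^sup>2) * (\<Sum>i<n. (b i)\<^sup>2)) / real n"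
    by (simp add: divide_right_mono)
  also have "\<dots> = sqrt ((\<Sum>i<n. (a i)\<^sup>2) / real n) * sqrt ((\<Sum>i<n. (b i)\<^sup>2) / real n)"
    by (simp add: real_sqrt_mult real_sqrt_divide)
  finally show ?thesis by (simp add: En_def)
qed

lemma En_square_diff:
  "En n (\<lambda>i. (z i - t * w i)\<^sup>2)
     = En n (\<lambda>i. (z i)\<^sup>2) - 2 * t * En n (\<lambda>i. w i * z i) + t\<^sup>2 * En n (\<lambda>i. (w i)\<^sup>2)"
proof -
  have "(\<lambda>i. (z i - t * w i)\<^sup>2) = (\<lambda>i. (z i)\<^sup>2 - (2 * t) * (w i * z i) + t\<^sup>2 * (w i)\<^sup>2)"
    by (rule ext) (simp add: power2_eq_square algebra_simps)
  then show ?thesis by (simp add: En_add En_diff En_cmult)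
qed

lemma En_residual_add_axis:
  assumes "En n (\<lambda>i. (x i $ j)\<^sup>2) = 1"
  shows "En n (\<lambda>i. (z i - x i \<bullet> (b + axis j t))\<^sup>2)
           = En n (\<lambda>i. (z i - x i \<bullet> b)\<^sup>2) - 2 * t * En n (\<lambda>i. x i $ j * (z i - x i \<bullet> b)) + t\<^sup>2"
proof -
  have "(\<lambda>i. (z i - x i \<bullet> (b + axis j t))\<^sup>2) = (\<lambda>i. ((z i - x i \<bullet> b) - t * x i $ j)\<^sup>2)"
    by (simp add: inner_add_right inner_axis algebra_simps)
  then show ?thesis
    using En_square_diff[of n "\<lambda>i. z i - x i \<bullet> b" t "\<lambda>i. x i $ j"] assms by simp
qed

lemma norm2n_nonneg: "norm2n n x d \<ge> 0"
  unfolding norm2n_def by (rule real_sqrt_ge_zero, rule En_nonneg) simp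

lemma norm2n_power2: "(norm2n n x d)\<^sup>2 = En n (\<lambda>i. (x i \<bullet> d)\<^sup>2)"
  unfolding norm2n_def by (rule real_sqrt_pow2, rule En_nonneg) simp

lemma l1_nonneg: "l1 d \<ge> 0"
  by (simp add: l1_def sum_nonneg)

lemma l1_eq_0_iff: "l1 d = 0 \<longleftrightarrow> d = 0"
  unfolding l1_def by (simp add: sum_nonneg_eq_0_iff vec_eq_iff)

lemma l1_restr: "l1 (restr A d) = (\<Sum>j\<in>A. \<bar>d $ j\<bar>)"
proof -
  have "l1 (restr A d) = (\<Sum>j\<in>UNIV. if j \<in> A then \<bar>d $ j\<bar> else 0)"
    unfolding l1_def restr_def by (rule sum.cong) auto
  also have "\<dots> = (\<Sum>j\<in>A. \<bar>d $ j\<bar>)"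
    by (simp add: sum.inter_restrict[symmetric])
  finally show ?thesis .
qed

lemma l1_restr_Compl: "l1 d = l1 (restr A d) + l1 (restr (- A) d)"
proof -
  have "l1 d = (\<Sum>j\<in>A. \<bar>d $ j\<bar>) + (\<Sum>j\<in>UNIV - A. \<bar>d $ j\<bar>)"
    unfolding l1_def using sum.subset_diff[of A UNIV "\<lambda>j. \<bar>d $ j\<bar>"] by (simp add: add.commute)
  then show ?thesis by (simp add: l1_restr Compl_eq_Diff_UNIV)
qed

lemma l1_restr_power2_le: "(l1 (restr A d))\<^sup>2 \<le> real (card A) * (\<Sum>j\<in>A. (d $ j)\<^sup>2)"
proof -
  have "(l1 (restr A d))\<^sup>2 = (\<Sum>j\<in>A. 1 * \<bar>d $ j\<bar>)\<^sup>2" by (simp add: l1_restr)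
  also have "\<dots> \<le> (\<Sum>j\<in>A. 1\<^sup>2) * (\<Sum>j\<in>A. \<bar>d $ j\<bar>\<^sup>2)" by (rule Cauchy_Schwarz_ineq_sum)
  finally show ?thesis by simp
qed

lemma l1_add_axis_le: "l1 (b + axis j t) \<le> l1 b + \<bar>t\<bar>"
proof -
  have "l1 (b + axis j t) \<le> (\<Sum>k\<in>UNIV. \<bar>b $ k\<bar> + \<bar>axis j t $ k\<bar>)"
    unfolding l1_def by (rule sum_mono) (simp add: abs_triangle_ineq)
  also have "\<dots> = l1 b + \<bar>t\<bar>"
  proof -
    have "\<bar>axis j t $ k\<bar> = (if k = j then \<bar>t\<bar> else 0)" for k
      by (simp add: axis_def)
    then show ?thesis by (simp add: sum.distrib l1_def)
  qed
  finally show ?thesis .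
qed

lemma l0_add_axis_le: "l0 (b + axis j t) \<le> l0 b + 1"
proof -
  have "supp (b + axis j t) \<subseteq> insert j (supp b)"
    by (auto simp: supp_def axis_def)
  then have "card (supp (b + axis j t)) \<le> card (insert j (supp b))"
    by (rule card_mono[rotated]) simp
  also have "\<dots> \<le> card (supp b) + 1"
    by (simp add: card_insert_le_m1)
  finally show ?thesis by (simp add: l0_def)
qed

lemma abs_le_linf: "\<bar>v $ j\<bar> \<le> linf v"
  unfolding linf_def by (rule Max_ge) auto

lemma inner_le_linf_l1: "v \<bullet> d \<le> linf v * l1 d"
proof -
  have "v \<bullet> d \<le> (\<Sum>j\<in>UNIV. \<bar>v $ j\<bar> * \<bar>d $ j\<bar>)"
    unfolding inner_vec_def by (rule sum_mono) (metis abs_ge_self abs_mult inner_real_def)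
  also have "\<dots> \<le> (\<Sum>j\<in>UNIV. linf v * \<bar>d $ j\<bar>)"
    by (intro sum_mono mult_right_mono abs_le_linf) simp
  also have "\<dots> = linf v * l1 d" by (simp add: l1_def sum_distrib_left)
  finally show ?thesis .
qed

lemma l1_diff_le_restr_supp:
  "l1 b - l1 b' \<le> l1 (restr (supp b) (b' - b)) - l1 (restr (- supp b) (b' - b))"
proof -
  let ?T = "supp b"
  have "l1 (restr ?T b) - l1 (restr ?T b') = (\<Sum>j\<in>?T. \<bar>b $ j\<bar> - \<bar>b' $ j\<bar>)"
    by (simp add: l1_restr sum_subtractf)
  also have "\<dots> \<le> l1 (restr ?T (b' - b))"
    unfolding l1_restr by (rule sum_mono) auto
  finally have "l1 (restr ?T b) - l1 (restr ?T b') \<le> l1 (restr ?T (b' - b))" .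
  moreover have "l1 (restr (- ?T) b) = 0" "l1 (restr (- ?T) b') = l1 (restr (- ?T) (b' - b))"
    by (simp_all add: l1_restr supp_def)
  ultimately show ?thesis
    using l1_restr_Compl[of b ?T] l1_restr_Compl[of b' ?T] by linarith
qed

lemma le_add_if_power2_le:
  fixes z p r :: real
  assumes quad: "z\<^sup>2 \<le> p * z + r\<^sup>2" and "p \<ge> 0" "r \<ge> 0"
  shows "z \<le> p + r"
proof (rule ccontr)
  assume "\<not> ?thesis"
  then have "(p + r) * z < z * z" "r * r \<le> r * z"
    using assms by (auto intro: mult_strict_right_mono mult_left_mono)
  then show False using quad by (simp add: power2_eq_square algebra_simps)
qed

lemma supp_eq_threshold:
  fixes b0 bh :: "real^'p"
  assumes err: "\<And>j. \<bar>bh $ j - b0 $ j\<bar> \<le> \<zeta>" and t: "\<zeta> \<le> t"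
    and gap: "Min ((\<lambda>j. \<bar>b0 $ j\<bar>) ` supp b0) > \<zeta> + t"
  shows "supp b0 = {j. \<bar>bh $ j\<bar> > t}" and "supp b0 \<subseteq> supp bh"
proof -
  have "\<bar>bh $ j\<bar> > t" if "j \<in> supp b0" for j
  proof -
    have "Min ((\<lambda>j. \<bar>b0 $ j\<bar>) ` supp b0) \<le> \<bar>b0 $ j\<bar>" using that by (intro Min_le) auto
    moreover have "\<bar>b0 $ j\<bar> \<le> \<bar>bh $ j\<bar> + \<bar>bh $ j - b0 $ j\<bar>" by linarith
    ultimately show ?thesis using gap err[of j] by linarith
  qed
  moreover have "\<bar>bh $ j\<bar> \<le> t" if "j \<notin> supp b0" for j
    using that err[of j] t by (simp add: supp_def)
  ultimately show "supp b0 = {j. \<bar>bh $ j\<bar> > t}" by (auto simp: not_less[symmetric])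
  moreover have "t \<ge> 0" using t err by (meson abs_ge_zero order_trans)
  ultimately show "supp b0 \<subseteq> supp bh" by (auto simp: supp_def)
qed

section \<open>Optimality conditions\<close>

lemma abs_le_half_if_perturbation_nonneg:
  fixes g L :: real
  assumes L: "L \<ge> 0" and perturb: "\<And>t. 2 * t * g \<le> t\<^sup>2 + L * \<bar>t\<bar>"
  shows "\<bar>g\<bar> \<le> L / 2"
proof (rule ccontr)
  assume neg: "\<not> ?thesis"
  define a where "a = \<bar>g\<bar> - L / 2"
  have a: "a > 0" using neg by (simp add: a_def)
  then have "g \<noteq> 0" using L by (auto simp: a_def)
  define t where "t = sgn g * a"
  have "t * g = a * \<bar>g\<bar>" by (simp add: t_def abs_sgn mult_ac)
  moreover have "\<bar>t\<bar> = a" using \<open>g \<noteq> 0\<close> a by (simp add: t_def abs_mult abs_sgn_eq)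
  moreover from this have "t\<^sup>2 = a\<^sup>2" by (metis power2_abs)
  ultimately have "2 * a * \<bar>g\<bar> \<le> a\<^sup>2 + L * a"
    using perturb[of t] by (simp add: mult.assoc)
  moreover have "2 * a * \<bar>g\<bar> = a\<^sup>2 + L * a + a\<^sup>2"
    by (simp add: a_def power2_eq_square algebra_simps)
  ultimately show False using a by simp
qed

lemma lasso_kkt:
  assumes lasso: "lasso_sol n x y lam bh" and col: "En n (\<lambda>i. (x i $ j)\<^sup>2) = 1" and lam: "lam \<ge> 0"
  shows "\<bar>En n (\<lambda>i. x i $ j * (y i - x i \<bullet> bh))\<bar> \<le> lam / (2 * real n)"
proof -
  define g where "g = En n (\<lambda>i. x i $ j * (y i - x i \<bullet> bh))"
  define L where "L = lam / real n"
  define R where "R b = En n (\<lambda>i. (y i - x i \<bullet> b)\<^sup>2)" for b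
  have L: "L \<ge> 0" using lam by (simp add: L_def)
  have "2 * t * g \<le> t\<^sup>2 + L * \<bar>t\<bar>" for t
  proof -
    have "R bh + L * l1 bh \<le> R (bh + axis j t) + L * l1 (bh + axis j t)"
      using lasso by (simp add: lasso_sol_def R_def L_def)
    also have "\<dots> \<le> R bh - 2 * t * g + t\<^sup>2 + L * (l1 bh + \<bar>t\<bar>)"
      using En_residual_add_axis[OF col, of y bh t] mult_left_mono[OF l1_add_axis_le L]
      by (simp add: R_def g_def)
    finally show ?thesis by (simp add: algebra_simps)
  qed
  then have "\<bar>g\<bar> \<le> L / 2" by (rule abs_le_half_if_perturbation_nonneg[OF L])
  then show ?thesis by (simp add: g_def L_def)
qed

lemma oracle_correlation_bound:
  assumes orac: "oracsol n x f \<sigma> b0" and col: "En n (\<lambda>i. (x i $ j)\<^sup>2) = 1" and \<sigma>: "\<sigma> \<ge> 0"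
  shows "\<bar>En n (\<lambda>i. x i $ j * (f i - x i \<bullet> b0))\<bar>
           \<le> min (\<sigma> / sqrt (real n)) (sqrt (En n (\<lambda>i. (f i - x i \<bullet> b0)\<^sup>2)))"
proof -
  define g where "g = En n (\<lambda>i. x i $ j * (f i - x i \<bullet> b0))"
  define R where "R b = En n (\<lambda>i. (f i - x i \<bullet> b)\<^sup>2)" for b
  have step: "R (b0 + axis j g) = R b0 - g\<^sup>2"
    using En_residual_add_axis[OF col, of f b0 g] by (simp add: R_def g_def power2_eq_square)
  have "R b0 + \<sigma>\<^sup>2 * real (l0 b0) / real n
          \<le> R (b0 + axis j g) + \<sigma>\<^sup>2 * real (l0 (b0 + axis j g)) / real n"
    using orac by (simp add: oracsol_def R_def)
  also have "\<dots> \<le> R b0 - g\<^sup>2 + \<sigma>\<^sup>2 * (real (l0 b0) + 1) / real n"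
    unfolding step using l0_add_axis_le[of b0 j g]
    by (intro add_left_mono divide_right_mono mult_left_mono) auto
  finally have "g\<^sup>2 \<le> \<sigma>\<^sup>2 / real n" by (simp add: algebra_simps add_divide_distrib)
  then have "\<bar>g\<bar> \<le> \<sigma> / sqrt (real n)"
    using real_sqrt_le_mono \<sigma> by (fastforce simp: real_sqrt_divide)
  moreover have "g\<^sup>2 \<le> R b0"
    using step En_nonneg[of "\<lambda>i. (f i - x i \<bullet> (b0 + axis j g))\<^sup>2" n] by (simp add: R_def)
  then have "\<bar>g\<bar> \<le> sqrt (R b0)"
    using real_sqrt_le_mono by fastforce
  ultimately show ?thesis by (simp add: g_def R_def)
qed

lemma lasso_basic_inequality:
  assumes lasso: "lasso_sol n x y lam bh" and model: "\<forall>i<n. y i = f i + eps i"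
  shows "(norm2n n x (bh - b0))\<^sup>2
           \<le> 2 * En n (\<lambda>i. (f i - x i \<bullet> b0) * (x i \<bullet> (bh - b0)))
             + (\<chi> j. 2 * En n (\<lambda>i. x i $ j * eps i)) \<bullet> (bh - b0) + lam / real n * (l1 b0 - l1 bh)"
proof -
  define d where "d = bh - b0"
  have expand: "En n (\<lambda>i. (y i - x i \<bullet> bh)\<^sup>2) = En n (\<lambda>i. (y i - x i \<bullet> b0)\<^sup>2)
       - 2 * 1 * En n (\<lambda>i. (x i \<bullet> d) * (y i - x i \<bullet> b0)) + 1\<^sup>2 * En n (\<lambda>i. (x i \<bullet> d)\<^sup>2)"
  proof -
    have "(\<lambda>i. (y i - x i \<bullet> bh)\<^sup>2) = (\<lambda>i. ((y i - x i \<bullet> b0) - 1 * (x i \<bullet> d))\<^sup>2)"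
      by (simp add: d_def inner_diff_right)
    then show ?thesis by (simp only: En_square_diff)
  qed
  have "En n (\<lambda>i. (x i \<bullet> d) * (y i - x i \<bullet> b0))
          = En n (\<lambda>i. (f i - x i \<bullet> b0) * (x i \<bullet> d) + (x i \<bullet> d) * eps i)"
    using model by (intro En_cong) (simp add: algebra_simps)
  then have split: "En n (\<lambda>i. (x i \<bullet> d) * (y i - x i \<bullet> b0))
          = En n (\<lambda>i. (f i - x i \<bullet> b0) * (x i \<bullet> d)) + En n (\<lambda>i. (x i \<bullet> d) * eps i)"
    by (simp add: En_add)
  have "(\<lambda>i. (x i \<bullet> d) * eps i) = (\<lambda>i. \<Sum>j\<in>UNIV. d $ j * (x i $ j * eps i))"
    by (rule ext) (simp add: inner_vec_def sum_distrib_left algebra_simps)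
  then have "En n (\<lambda>i. (x i \<bullet> d) * eps i) = (\<Sum>j\<in>UNIV. d $ j * En n (\<lambda>i. x i $ j * eps i))"
    by (simp add: En_sum En_cmult)
  then have noise: "2 * En n (\<lambda>i. (x i \<bullet> d) * eps i) = (\<chi> j. 2 * En n (\<lambda>i. x i $ j * eps i)) \<bullet> d"
    by (simp add: inner_vec_def sum_distrib_left mult_ac)
  have "En n (\<lambda>i. (y i - x i \<bullet> bh)\<^sup>2) + lam / real n * l1 bh
          \<le> En n (\<lambda>i. (y i - x i \<bullet> b0)\<^sup>2) + lam / real n * l1 b0"
    using lasso by (simp add: lasso_sol_def)
  then show ?thesis
    using expand split noise by (simp add: norm2n_power2 d_def[symmetric] algebra_simps)
qed

lemma linf_le_of_penalty:
  assumes lam: "lam \<ge> c * real n * linf v" and c: "c > 0" and n: "n \<ge> 1"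
  shows "linf v \<le> lam / real n / c"
proof -
  have "linf v * (c * real n) \<le> lam" using lam by (simp add: mult_ac)
  then show ?thesis using c n by (simp add: le_divide_eq mult.commute)
qed

lemma noise_correlation_le:
  assumes "lam \<ge> c * real n * linf (\<chi> j. 2 * En n (\<lambda>i. x i $ j * eps i))" and "c > 0" and "n \<ge> 1"
  shows "\<bar>En n (\<lambda>i. x i $ j * eps i)\<bar> \<le> lam / (2 * c * real n)"
proof -
  have "2 * \<bar>En n (\<lambda>i. x i $ j * eps i)\<bar> \<le> lam / real n / c"
    using abs_le_linf[of "\<chi> j. 2 * En n (\<lambda>i. x i $ j * eps i)" j] linf_le_of_penalty[OF assms]
    by (simp add: abs_mult)
  then show ?thesis by (simp add: field_simps)
qed

lemma lasso_cone_inequality: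
  assumes lasso: "lasso_sol n x y lam bh" and model: "\<forall>i<n. y i = f i + eps i"
    and n: "n \<ge> 1" and c: "c > 1"
    and lam: "lam \<ge> c * real n * linf (\<chi> j. 2 * En n (\<lambda>i. x i $ j * eps i))"
  shows "(norm2n n x (bh - b0))\<^sup>2
           \<le> 2 * sqrt (En n (\<lambda>i. (f i - x i \<bullet> b0)\<^sup>2)) * norm2n n x (bh - b0)
             + lam / real n * (1 - 1 / c) * ((c + 1) / (c - 1) * l1 (restr (supp b0) (bh - b0))
                                             - l1 (restr (- supp b0) (bh - b0)))"
proof -
  define S where "S = (\<chi> j. 2 * En n (\<lambda>i. x i $ j * eps i))"
  define L where "L = lam / real n"
  define d where "d = bh - b0"
  define a where "a = l1 (restr (supp b0) d)"
  define b where "b = l1 (restr (- supp b0) d)"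
  have linf: "linf S \<le> L / c" using linf_le_of_penalty[OF lam] c n by (simp add: S_def L_def)
  have "0 \<le> L / c" using linf order_trans[OF abs_ge_zero abs_le_linf[of S]] by linarith
  then have L: "L \<ge> 0" using c by (simp add: zero_le_divide_iff)
  have "S \<bullet> d \<le> linf S * (a + b)"
    using inner_le_linf_l1[of S d] l1_restr_Compl[of d "supp b0"] by (simp add: a_def b_def)
  also have "\<dots> \<le> L / c * (a + b)"
    using linf by (intro mult_right_mono) (auto simp: a_def b_def l1_nonneg)
  finally have noise: "S \<bullet> d \<le> L / c * (a + b)" .
  have "L * (l1 b0 - l1 bh) \<le> L * (a - b)"
    using l1_diff_le_restr_supp[of b0 bh] L by (intro mult_left_mono) (simp_all add: a_def b_def d_def)
  moreover have "En n (\<lambda>i. (f i - x i \<bullet> b0) * (x i \<bullet> d))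
                   \<le> sqrt (En n (\<lambda>i. (f i - x i \<bullet> b0)\<^sup>2)) * norm2n n x d"
    using En_cauchy_schwarz by (simp add: norm2n_def)
  ultimately have "(norm2n n x d)\<^sup>2 \<le> 2 * sqrt (En n (\<lambda>i. (f i - x i \<bullet> b0)\<^sup>2)) * norm2n n x d
                     + (L / c * (a + b) + L * (a - b))"
    using lasso_basic_inequality[OF lasso model, of b0] noise by (simp add: S_def L_def d_def)
  also have "L / c * (a + b) + L * (a - b) = L * (1 - 1 / c) * ((c + 1) / (c - 1) * a - b)"
    using c by (simp add: field_simps)
  finally show ?thesis by (simp add: L_def a_def b_def d_def)
qed

section \<open>Restricted and sparse eigenvalues\<close>

lemma RE_mult_l1_le:
  assumes cone: "l1 (restr (- T) d) \<le> C * l1 (restr T d)" and nz: "restr T d \<noteq> 0"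
  shows "RE n x T C * l1 (restr T d) \<le> sqrt (real (card T)) * norm2n n x d"
proof -
  let ?A = "{sqrt (real (card T)) * norm2n n x d / l1 (restr T d) | d.
               l1 (restr (- T) d) \<le> C * l1 (restr T d) \<and> restr T d \<noteq> 0}"
  have "bdd_below ?A"
    by (rule bdd_belowI[of _ 0]) (auto simp: norm2n_nonneg l1_nonneg)
  moreover have "sqrt (real (card T)) * norm2n n x d / l1 (restr T d) \<in> ?A"
    using cone nz by blast
  ultimately have "RE n x T C \<le> sqrt (real (card T)) * norm2n n x d / l1 (restr T d)"
    unfolding RE_def by (rule cInf_lower[rotated])
  moreover have "l1 (restr T d) > 0" using nz l1_nonneg l1_eq_0_iff by (metis less_eq_real_def)
  ultimately show ?thesis by (simp add: le_divide_eq)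
qed

lemma SE_mult_norm_le:
  assumes sparse: "l0 (restr (- T) d) \<le> m"
  shows "SE n x T m * norm d \<le> norm2n n x d"
proof (cases "d = 0")
  case True
  then show ?thesis by (simp add: norm2n_nonneg)
next
  case False
  let ?A = "{(norm2n n x d)\<^sup>2 / (norm d)\<^sup>2 | d. d \<noteq> 0 \<and> l0 (restr (- T) d) \<le> m}"
  have mem: "(norm2n n x d)\<^sup>2 / (norm d)\<^sup>2 \<in> ?A" using False sparse by blast
  have "bdd_below ?A" by (rule bdd_belowI[of _ 0]) auto
  then have "Inf ?A \<le> (norm2n n x d)\<^sup>2 / (norm d)\<^sup>2" using mem by (rule cInf_lower[rotated])
  moreover have "Inf ?A \<ge> 0" using mem by (intro cInf_greatest) auto
  ultimately have "(SE n x T m)\<^sup>2 \<le> (norm2n n x d / norm d)\<^sup>2"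
    by (simp add: SE_def power_divide)
  then have "SE n x T m \<le> norm2n n x d / norm d"
    by (rule power2_le_imp_le) (simp add: norm2n_nonneg)
  then show ?thesis using False by (simp add: le_divide_eq)
qed

lemma norm2n_le_of_cone_RE:
  assumes cone: "(norm2n n x d)\<^sup>2 \<le> 2 * r * norm2n n x d + v * (C * l1 (restr T d) - l1 (restr (- T) d))"
    and v: "v > 0" and C: "C \<ge> 0" and r: "r \<ge> 0" and RE: "RE n x T C > 0"
  shows "norm2n n x d \<le> 2 * r + v * C * sqrt (real (card T)) / RE n x T C"
proof -
  let ?q = "norm2n n x d" and ?a = "l1 (restr T d)" and ?b = "l1 (restr (- T) d)"
  let ?\<kappa> = "RE n x T C" and ?s = "sqrt (real (card T))"
  have "?q\<^sup>2 \<le> (2 * r + v * C * ?s / ?\<kappa>) * ?q + 0\<^sup>2"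
  proof (cases "restr T d \<noteq> 0 \<and> ?b \<le> C * ?a")
    case True
    then have "?\<kappa> * ?a \<le> ?s * ?q" by (intro RE_mult_l1_le) auto
    then have "?a \<le> ?s * ?q / ?\<kappa>" using RE by (simp add: le_divide_eq mult.commute)
    then have "v * C * ?a \<le> v * C * (?s * ?q / ?\<kappa>)" using v C by (intro mult_left_mono) auto
    moreover have "v * ?b \<ge> 0" using v l1_nonneg[of "restr (- T) d"] by simp
    ultimately show ?thesis using cone by (simp add: algebra_simps)
  next
    case outside: False
    have "C * ?a - ?b \<le> 0"
    proof (cases "restr T d = 0")
      case True
      then show ?thesis using l1_nonneg[of "restr (- T) d"] by (simp add: l1_def)
    next
      case False
      then show ?thesis using outside by simp
    qed
    then have "v * (C * ?a - ?b) \<le> 0" using v by (simp add: mult_nonneg_nonpos)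
    moreover have "0 \<le> v * C * ?s / ?\<kappa> * ?q"
      using v C RE by (simp add: norm2n_nonneg)
    ultimately show ?thesis using cone by (simp add: algebra_simps)
  qed
  then have "?q \<le> 2 * r + v * C * ?s / ?\<kappa> + 0"
    by (rule le_add_if_power2_le) (use v C r RE in simp_all)
  then show ?thesis by simp
qed

lemma lasso_coordinate_error_RE_SE:
  assumes lasso: "lasso_sol n x y lam bh" and model: "\<forall>i<n. y i = f i + eps i"
    and n: "n \<ge> 1" and c: "c > 1" and lam_pos: "lam > 0"
    and lam: "lam \<ge> c * real n * linf (\<chi> j. 2 * En n (\<lambda>i. x i $ j * eps i))"
    and RE: "RE n x (supp b0) ((c + 1) / (c - 1)) > 0"
    and SE: "SE n x (supp b0) (card (supp bh - supp b0)) > 0"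
  shows "\<bar>bh $ j - b0 $ j\<bar>
           \<le> (1 + 1 / c) * lam * sqrt (real (card (supp b0)))
                 / (real n * RE n x (supp b0) ((c + 1) / (c - 1)) * SE n x (supp b0) (card (supp bh - supp b0)))
             + 2 * sqrt (En n (\<lambda>i. (f i - x i \<bullet> b0)\<^sup>2)) / SE n x (supp b0) (card (supp bh - supp b0))"
proof -
  define T where "T = supp b0"
  define d where "d = bh - b0"
  define r where "r = sqrt (En n (\<lambda>i. (f i - x i \<bullet> b0)\<^sup>2))"
  define C where "C = (c + 1) / (c - 1)"
  define v where "v = lam / real n * (1 - 1 / c)"
  define \<kappa> where "\<kappa> = RE n x T C"
  define \<phi> where "\<phi> = SE n x T (card (supp bh - T))"
  have v: "v > 0" and C: "C \<ge> 0" using c n lam_pos by (simp_all add: v_def C_def field_simps)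
  have r: "r \<ge> 0" by (simp add: r_def En_nonneg)
  have "(norm2n n x d)\<^sup>2 \<le> 2 * r * norm2n n x d + v * (C * l1 (restr T d) - l1 (restr (- T) d))"
    using lasso_cone_inequality[OF lasso model n c lam, of b0]
    by (simp add: T_def d_def r_def v_def C_def)
  then have pred: "norm2n n x d \<le> 2 * r + v * C * sqrt (real (card T)) / \<kappa>"
    using norm2n_le_of_cone_RE[OF _ v C r] RE by (simp add: \<kappa>_def T_def C_def)
  have "supp (restr (- T) d) \<subseteq> supp bh - T"
    by (auto simp: supp_def restr_def T_def d_def)
  then have "l0 (restr (- T) d) \<le> card (supp bh - T)"
    unfolding l0_def by (rule card_mono[rotated]) simp
  then have "\<phi> * norm d \<le> norm2n n x d" unfolding \<phi>_def by (rule SE_mult_norm_le)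
  moreover have "\<phi> * \<bar>d $ j\<bar> \<le> \<phi> * norm d"
    using SE component_le_norm_cart[of d j] by (simp add: \<phi>_def T_def)
  ultimately have "\<phi> * \<bar>d $ j\<bar> \<le> 2 * r + v * C * sqrt (real (card T)) / \<kappa>"
    using pred by linarith
  then have "\<bar>d $ j\<bar> \<le> (2 * r + v * C * sqrt (real (card T)) / \<kappa>) / \<phi>"
    using SE by (simp add: \<phi>_def T_def le_divide_eq mult.commute)
  also have "v * C = (1 + 1 / c) * lam / real n" using c n by (simp add: v_def C_def field_simps)
  finally show ?thesis by (simp add: d_def T_def \<kappa>_def \<phi>_def r_def C_def add_divide_distrib mult_ac)
qed

section \<open>Mutual coherence\<close>

lemma En_inner_inner_coherence:
  assumes normalized: "\<forall>j. En n (\<lambda>i. (x i $ j)\<^sup>2) = 1"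
    and coherent: "\<forall>j k. j \<noteq> k \<longrightarrow> \<bar>En n (\<lambda>i. x i $ j * x i $ k)\<bar> \<le> \<epsilon>" and \<epsilon>: "\<epsilon> \<ge> 0"
  shows "\<bar>En n (\<lambda>i. (x i \<bullet> d) * (x i \<bullet> e)) - d \<bullet> e\<bar> \<le> \<epsilon> * l1 d * l1 e"
proof -
  define G where "G j k = En n (\<lambda>i. x i $ j * x i $ k) - (if j = k then 1 else 0)" for j k
  have G: "\<bar>G j k\<bar> \<le> \<epsilon>" for j k
    using normalized coherent \<epsilon> by (cases "j = k") (simp_all add: G_def power2_eq_square)
  have "(\<lambda>i. (x i \<bullet> d) * (x i \<bullet> e)) = (\<lambda>i. \<Sum>j\<in>UNIV. \<Sum>k\<in>UNIV. d $ j * e $ k * (x i $ j * x i $ k))"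
    by (rule ext) (simp add: inner_vec_def sum_product algebra_simps)
  then have "En n (\<lambda>i. (x i \<bullet> d) * (x i \<bullet> e))
               = (\<Sum>j\<in>UNIV. \<Sum>k\<in>UNIV. d $ j * e $ k * En n (\<lambda>i. x i $ j * x i $ k))"
    by (simp add: En_sum En_cmult)
  moreover have "d \<bullet> e = (\<Sum>j\<in>UNIV. \<Sum>k\<in>UNIV. d $ j * e $ k * (if j = k then 1 else 0))"
    by (simp add: inner_vec_def if_distrib cong: if_cong)
  ultimately have "En n (\<lambda>i. (x i \<bullet> d) * (x i \<bullet> e)) - d \<bullet> e
                     = (\<Sum>j\<in>UNIV. \<Sum>k\<in>UNIV. d $ j * e $ k * G j k)"
    by (simp add: G_def sum_subtractf[symmetric] algebra_simps)
  also have "\<bar>\<dots>\<bar> \<le> (\<Sum>j\<in>UNIV. \<Sum>k\<in>UNIV. \<epsilon> * (\<bar>d $ j\<bar> * \<bar>e $ k\<bar>))"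
  proof (rule order_trans[OF sum_abs], intro sum_mono order_trans[OF sum_abs])
    fix j k
    have "\<bar>d $ j * e $ k * G j k\<bar> = (\<bar>d $ j\<bar> * \<bar>e $ k\<bar>) * \<bar>G j k\<bar>" by (simp add: abs_mult)
    also have "\<dots> \<le> (\<bar>d $ j\<bar> * \<bar>e $ k\<bar>) * \<epsilon>" by (rule mult_left_mono[OF G]) simp
    finally show "\<bar>d $ j * e $ k * G j k\<bar> \<le> \<epsilon> * (\<bar>d $ j\<bar> * \<bar>e $ k\<bar>)" by (simp add: mult.commute)
  qed
  also have "\<dots> = \<epsilon> * (l1 d * l1 e)"
    unfolding l1_def sum_product by (simp add: sum_distrib_left)
  finally show ?thesis by (simp add: mult.assoc)
qed

lemma lasso_coordinate_error_le_l1: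
  assumes lasso: "lasso_sol n x y lam bh" and model: "\<forall>i<n. y i = f i + eps i"
    and orac: "oracsol n x f \<sigma> b0" and \<sigma>: "\<sigma> \<ge> 0" and lam: "lam \<ge> 0"
    and normalized: "\<forall>j. En n (\<lambda>i. (x i $ j)\<^sup>2) = 1"
    and coherent: "\<forall>j k. j \<noteq> k \<longrightarrow> \<bar>En n (\<lambda>i. x i $ j * x i $ k)\<bar> \<le> \<epsilon>" and \<epsilon>: "\<epsilon> \<ge> 0"
  shows "\<bar>bh $ j - b0 $ j\<bar> \<le> lam / (2 * real n) + \<bar>En n (\<lambda>i. x i $ j * eps i)\<bar>
           + min (\<sigma> / sqrt (real n)) (sqrt (En n (\<lambda>i. (f i - x i \<bullet> b0)\<^sup>2))) + \<epsilon> * l1 (bh - b0)"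
proof -
  define d where "d = bh - b0"
  have "l1 (axis j (1::real)) \<le> 1" using l1_add_axis_le[of 0 j 1] by (simp add: l1_def)
  then have "\<epsilon> * l1 (axis j 1) * l1 d \<le> \<epsilon> * 1 * l1 d"
    using \<epsilon> l1_nonneg[of d] by (intro mult_right_mono mult_left_mono) auto
  then have gram: "\<bar>En n (\<lambda>i. x i $ j * (x i \<bullet> d)) - d $ j\<bar> \<le> \<epsilon> * l1 d"
    using En_inner_inner_coherence[OF normalized coherent \<epsilon>, of "axis j 1" d]
    by (simp add: inner_axis inner_axis' inner_commute)
  have "En n (\<lambda>i. x i $ j * (y i - x i \<bullet> bh))
          = En n (\<lambda>i. x i $ j * (f i - x i \<bullet> b0) + x i $ j * eps i - x i $ j * (x i \<bullet> d))"
    using model by (intro En_cong) (simp add: d_def inner_diff_right algebra_simps)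
  then have "En n (\<lambda>i. x i $ j * (y i - x i \<bullet> bh))
          = En n (\<lambda>i. x i $ j * (f i - x i \<bullet> b0)) + En n (\<lambda>i. x i $ j * eps i)
            - En n (\<lambda>i. x i $ j * (x i \<bullet> d))"
    by (simp add: En_add En_diff)
  moreover have col: "En n (\<lambda>i. (x i $ j)\<^sup>2) = 1" using normalized by blast
  note lasso_kkt[OF lasso col lam] oracle_correlation_bound[OF orac col \<sigma>]
  ultimately show ?thesis using gram by (simp add: d_def) linarith
qed

lemma norm2n_power2_ge_coherence:
  assumes normalized: "\<forall>j. En n (\<lambda>i. (x i $ j)\<^sup>2) = 1"
    and coherent: "\<forall>j k. j \<noteq> k \<longrightarrow> \<bar>En n (\<lambda>i. x i $ j * x i $ k)\<bar> \<le> \<epsilon>" and \<epsilon>: "\<epsilon> \<ge> 0"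
  shows "(l1 (restr T d))\<^sup>2 / real (card T)
           - \<epsilon> * ((l1 (restr T d))\<^sup>2 + 2 * l1 (restr T d) * l1 (restr (- T) d))
         \<le> (norm2n n x d)\<^sup>2"
proof -
  define dT where "dT = restr T d"
  define dC where "dC = restr (- T) d"
  have "d = dT + dC" by (simp add: dT_def dC_def restr_def vec_eq_iff)
  then have "(\<lambda>i. (x i \<bullet> d)\<^sup>2)
               = (\<lambda>i. (x i \<bullet> dT) * (x i \<bullet> dT) + 2 * ((x i \<bullet> dT) * (x i \<bullet> dC)) + (x i \<bullet> dC)\<^sup>2)"
    by (simp add: inner_add_right power2_eq_square algebra_simps)
  then have expand: "(norm2n n x d)\<^sup>2 = En n (\<lambda>i. (x i \<bullet> dT) * (x i \<bullet> dT))
                        + 2 * En n (\<lambda>i. (x i \<bullet> dT) * (x i \<bullet> dC)) + En n (\<lambda>i. (x i \<bullet> dC)\<^sup>2)"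
    by (simp add: norm2n_power2 En_add En_cmult)
  have TT: "\<bar>En n (\<lambda>i. (x i \<bullet> dT) * (x i \<bullet> dT)) - dT \<bullet> dT\<bar> \<le> \<epsilon> * l1 dT * l1 dT"
    and TC: "\<bar>En n (\<lambda>i. (x i \<bullet> dT) * (x i \<bullet> dC)) - dT \<bullet> dC\<bar> \<le> \<epsilon> * l1 dT * l1 dC"
    by (rule En_inner_inner_coherence[OF normalized coherent \<epsilon>])+
  have "dT \<bullet> dC = 0" by (auto simp: dT_def dC_def restr_def inner_vec_def intro: sum.neutral)
  have "dT \<bullet> dT = (\<Sum>j\<in>UNIV. if j \<in> T then (d $ j)\<^sup>2 else 0)"
    unfolding dT_def restr_def inner_vec_def by (rule sum.cong) (auto simp: power2_eq_square)
  also have "\<dots> = (\<Sum>j\<in>T. (d $ j)\<^sup>2)"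
    by (simp add: sum.inter_restrict[symmetric])
  also have "\<dots> \<ge> (l1 dT)\<^sup>2 / real (card T)"
    using l1_restr_power2_le[of T d]
    by (cases "card T = 0") (simp_all add: dT_def divide_le_eq mult.commute sum_nonneg)
  finally have "(l1 dT)\<^sup>2 / real (card T) \<le> dT \<bullet> dT" .
  moreover have "En n (\<lambda>i. (x i \<bullet> dC)\<^sup>2) \<ge> 0" by (simp add: En_nonneg)
  ultimately show ?thesis
    using expand TT TC \<open>dT \<bullet> dC = 0\<close>
    by (simp add: dT_def dC_def power2_eq_square algebra_simps)
qed

lemma cone_inequality_consequences:
  fixes q t a b v C :: real
  assumes cone: "q\<^sup>2 \<le> 2 * t * q + v * (C * a - b)" and v: "v > 0" and b: "b \<ge> 0"
  shows "b \<le> C * a + t\<^sup>2 / v" and "q\<^sup>2 \<le> 4 * t\<^sup>2 + 2 * v * C * a"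
proof -
  have "0 \<le> (q - t)\<^sup>2" "0 \<le> (q - 2 * t)\<^sup>2" by simp_all
  then have "v * b \<le> v * C * a + t\<^sup>2" and "q\<^sup>2 \<le> 4 * t\<^sup>2 + 2 * v * C * a - 2 * v * b"
    using cone by (simp_all add: power2_eq_square algebra_simps)
  moreover have "v * b \<ge> 0" using v b by simp
  ultimately show "b \<le> C * a + t\<^sup>2 / v" and "q\<^sup>2 \<le> 4 * t\<^sup>2 + 2 * v * C * a"
    using v by (simp_all add: field_simps)
qed

(* Eliminating b leaves a quadratic inequality in a with leading coefficient 1 - (1 + 2C)/U. *)
lemma l1_bound_of_cone_and_coherence:
  fixes a b t v C U s :: real
  assumes s: "s > 0" and U: "U > 1 + 2 * C" and C: "C \<ge> 0" and v: "v > 0" and a: "a \<ge> 0" and t: "t \<ge> 0"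
    and b: "b \<le> C * a + t\<^sup>2 / v"
    and lower: "a\<^sup>2 / s - (a\<^sup>2 + 2 * a * b) / (U * s) \<le> 4 * t\<^sup>2 + 2 * v * C * a"
  shows "a \<le> (2 * v * C * s + 2 * t\<^sup>2 / (v * U) + 2 * t * sqrt s) / (1 - (1 + 2 * C) / U)"
proof -
  define K where "K = 1 - (1 + 2 * C) / U"
  have U0: "U > 0" using U C by linarith
  have K: "0 < K" "K \<le> 1" using U U0 C by (simp_all add: K_def field_simps)
  have "2 * a * b \<le> 2 * a * (C * a + t\<^sup>2 / v)" using a b by (simp add: mult_left_mono)
  then have "a\<^sup>2 / s - (a\<^sup>2 + 2 * a * (C * a + t\<^sup>2 / v)) / (U * s) \<le> 4 * t\<^sup>2 + 2 * v * C * a"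
    using lower U0 s by (smt (verit) divide_right_mono mult_pos_pos)
  moreover have "a\<^sup>2 / s - (a\<^sup>2 + 2 * a * (C * a + t\<^sup>2 / v)) / (U * s)
                   = (K * a\<^sup>2 - a * 2 * t\<^sup>2 / (v * U)) / s"
    using U0 s v by (simp add: K_def field_simps power2_eq_square)
  ultimately have "(K * a\<^sup>2 - a * 2 * t\<^sup>2 / (v * U)) / s \<le> 4 * t\<^sup>2 + 2 * v * C * a"
    by linarith
  then have "K * a\<^sup>2 - a * 2 * t\<^sup>2 / (v * U) \<le> (4 * t\<^sup>2 + 2 * v * C * a) * s"
    using s by (simp add: divide_le_eq)
  then have "K * a\<^sup>2 \<le> a * (2 * v * C * s + 2 * t\<^sup>2 / (v * U)) + 4 * t\<^sup>2 * s"
    by (simp add: algebra_simps)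
  then have "a\<^sup>2 \<le> (2 * v * C * s + 2 * t\<^sup>2 / (v * U)) / K * a + 4 * t\<^sup>2 * s / K"
    using K by (simp add: field_simps)
  also have "4 * t\<^sup>2 * s / K \<le> (2 * t * sqrt s / K)\<^sup>2"
  proof -
    have "K * K \<le> K" using K by (intro mult_left_le) auto
    then have "K\<^sup>2 * (4 * t\<^sup>2 * s) \<le> K * (4 * t\<^sup>2 * s)"
      using s by (intro mult_right_mono) (auto simp: power2_eq_square)
    then show ?thesis using K s by (simp add: power_divide power_mult_distrib field_simps)
  qed
  finally have "a \<le> (2 * v * C * s + 2 * t\<^sup>2 / (v * U)) / K + 2 * t * sqrt s / K"
    by (rule le_add_if_power2_le) (use K v U0 C s t in simp_all)
  then show ?thesis by (simp add: K_def add_divide_distrib)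
qed

lemma l1_error_le_of_cone_and_coherence:
  fixes a b t v C U s :: real
  assumes s: "s > 0" and C: "C \<ge> 0" and U: "U > 1 + 2 * C" and v: "v > 0"
    and a: "a \<ge> 0" and t: "t \<ge> 0" and b: "b \<le> C * a + t\<^sup>2 / v"
    and lower: "a\<^sup>2 / s - (a\<^sup>2 + 2 * a * b) / (U * s) \<le> 4 * t\<^sup>2 + 2 * v * C * a"
  shows "(a + b) / (U * s) \<le> 2 * v * C * (1 + C) / (U - 1 - 2 * C) + 2 * (1 + C) / (U - 1 - 2 * C) * (t / sqrt s)
                                + t\<^sup>2 / (v * U * s) * (2 * (1 + C) / (U - 1 - 2 * C) + 1)"
proof -
  define M where "M = U - 1 - 2 * C"
  define X where "X = 2 * v * C * s + 2 * t\<^sup>2 / (v * U) + 2 * t * sqrt s"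
  have U0: "U > 0" and M: "M > 0" using C U by (simp_all add: M_def)
  have "1 - (1 + 2 * C) / U = M / U" using U0 by (simp add: M_def field_simps)
  then have "a \<le> U * X / M"
    using l1_bound_of_cone_and_coherence[OF s U C v a t b lower] by (simp add: X_def mult.commute)
  then have "(1 + C) * a \<le> (1 + C) * (U * X / M)" using C by (intro mult_left_mono) auto
  then have "a + b \<le> (1 + C) * (U * X / M) + t\<^sup>2 / v" using b by (simp add: algebra_simps)
  then have "(a + b) / (U * s) \<le> ((1 + C) * (U * X / M) + t\<^sup>2 / v) / (U * s)"
    using U0 s by (intro divide_right_mono) auto
  also have "\<dots> = 2 * v * C * (1 + C) / M + 2 * (1 + C) / M * (t / sqrt s)
                    + t\<^sup>2 / (v * U * s) * (2 * (1 + C) / M + 1)"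
  proof -
    define w where "w = sqrt s"
    have "s = w\<^sup>2" "w > 0" using s by (simp_all add: w_def)
    then show ?thesis
      using U0 v M unfolding X_def w_def[symmetric] by (simp add: field_simps power2_eq_square)
  qed
  finally show ?thesis by (simp add: M_def)
qed

lemma coherence_constant_le:
  fixes C M :: real
  assumes C: "C > 1" and M: "M \<ge> 3 * C - 1"
  shows "(1 + C) / 2 * (2 * (1 + C) / M + 1) \<le> 4 * C"
proof -
  have M0: "M > 0" using C M by linarith
  have "(1 + C)\<^sup>2 = 2 * C * (3 * C - 1) - (5 * C + 1) * (C - 1)"
    by (simp add: power2_eq_square algebra_simps)
  also have "\<dots> \<le> 2 * C * (3 * C - 1)" using C by simp
  also have "\<dots> \<le> 2 * C * M" using C M by (intro mult_left_mono) simp_all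
  finally have "(1 + C)\<^sup>2 \<le> 2 * C * M" .
  moreover have "(1 + C) * M \<le> (4 * C) * M" using M0 C by (intro mult_right_mono) auto
  ultimately have "(1 + C)\<^sup>2 + (1 + C) * M / 2 \<le> 4 * C * M" by linarith
  then have "((1 + C)\<^sup>2 + (1 + C) * M / 2) / M \<le> 4 * C"
    using M0 by (simp add: divide_le_eq)
  moreover have "(1 + C) / 2 * (2 * (1 + C) / M + 1) = ((1 + C)\<^sup>2 + (1 + C) * M / 2) / M"
    using M0 by (simp add: field_simps power2_eq_square)
  ultimately show ?thesis by linarith
qed

lemma coherence_error_terms_le:
  fixes t v C U s L :: real
  assumes s: "s > 0" and C: "C > 1" and U: "U > 5 * C" and v: "v > 0" and L: "v * (1 + C) = 2 * L"
    and t: "t \<ge> 0"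
  defines "M \<equiv> U - 1 - 2 * C"
  shows "2 * v * C * (1 + C) / M + 2 * (1 + C) / M * (t / sqrt s) + t\<^sup>2 / (v * U * s) * (2 * (1 + C) / M + 1)
           \<le> L * (6 * C / (U - 5 * C)) + 6 * C / (U - 5 * C) * (t / sqrt s) + 4 * C / U * (1 / L) * (t\<^sup>2 / s)"
proof (intro add_mono)
  have U0: "U > 0" and M: "0 < U - 5 * C" "U - 5 * C \<le> M" and L0: "L > 0"
    using C U v L by (simp_all add: M_def) (smt (verit) mult_pos_pos)
  have "2 * v * C * (1 + C) = 2 * C * (v * (1 + C))" by (simp add: algebra_simps)
  then have "2 * v * C * (1 + C) / M = 4 * C * L / M" by (simp add: L)
  also have "\<dots> \<le> 4 * C * L / (U - 5 * C)" using M C L0 by (intro divide_left_mono) auto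
  also have "\<dots> \<le> L * (6 * C / (U - 5 * C))" using M C L0 by (simp add: divide_right_mono)
  finally show "2 * v * C * (1 + C) / M \<le> L * (6 * C / (U - 5 * C))" .
  show "2 * (1 + C) / M * (t / sqrt s) \<le> 6 * C / (U - 5 * C) * (t / sqrt s)"
    using M C t s by (intro mult_right_mono frac_le) auto
  have "(1 + C) / 2 * (2 * (1 + C) / M + 1) \<le> 4 * C"
    using C U by (intro coherence_constant_le) (simp_all add: M_def)
  then have bound: "t\<^sup>2 / (U * s * L) * ((1 + C) / 2 * (2 * (1 + C) / M + 1)) \<le> t\<^sup>2 / (U * s * L) * (4 * C)"
    using U0 s L0 by (intro mult_left_mono) auto
  have "(1 + C) / (2 * L) = 1 / v" using L v L0 by (simp add: field_simps)
  then have "t\<^sup>2 / (U * s * L) * ((1 + C) / 2) = t\<^sup>2 / (U * s) * (1 / v)"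
    by (metis times_divide_eq_right divide_divide_eq_left mult.commute mult.left_commute)
  then have "t\<^sup>2 / (U * s * L) * ((1 + C) / 2) = t\<^sup>2 / (v * U * s)"
    by (simp add: mult_ac)
  then have "t\<^sup>2 / (v * U * s) * (2 * (1 + C) / M + 1)
               = t\<^sup>2 / (U * s * L) * ((1 + C) / 2 * (2 * (1 + C) / M + 1))"
    by (metis mult.assoc)
  also have "\<dots> \<le> t\<^sup>2 / (U * s * L) * (4 * C)" by (rule bound)
  also have "\<dots> = 4 * C / U * (1 / L) * (t\<^sup>2 / s)" by (simp add: field_simps)
  finally show "t\<^sup>2 / (v * U * s) * (2 * (1 + C) / M + 1) \<le> 4 * C / U * (1 / L) * (t\<^sup>2 / s)" .
qed

lemma lasso_coordinate_error_coherence: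
  fixes n :: nat and x :: "nat \<Rightarrow> real^'p" and f :: "nat \<Rightarrow> real" and b0 :: "real^'p" and c :: real
  defines "C \<equiv> (c + 1) / (c - 1)" and "s \<equiv> real (card (supp b0))"
    and "r \<equiv> sqrt (En n (\<lambda>i. (f i - x i \<bullet> b0)\<^sup>2))"
  assumes lasso: "lasso_sol n x y lam bh" and model: "\<forall>i<n. y i = f i + eps i"
    and orac: "oracsol n x f \<sigma> b0" and \<sigma>: "\<sigma> \<ge> 0"
    and n: "n \<ge> 1" and c: "c > 1" and lam_pos: "lam > 0"
    and lam: "lam \<ge> c * real n * linf (\<chi> j. 2 * En n (\<lambda>i. x i $ j * eps i))"
    and normalized: "\<forall>j. En n (\<lambda>i. (x i $ j)\<^sup>2) = 1"
    and T: "supp b0 \<noteq> {}" and U: "U > 5 * C"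
    and coherent: "\<forall>j k. j \<noteq> k \<longrightarrow> \<bar>En n (\<lambda>i. x i $ j * x i $ k)\<bar> \<le> 1 / (U * s)"
  shows "\<bar>bh $ j - b0 $ j\<bar> \<le> lam / real n * ((U + C) / (U - 5 * C)) + min (\<sigma> / sqrt (real n)) r
           + 6 * C / (U - 5 * C) * (r / sqrt s) + 4 * C / U * (real n / lam) * (r\<^sup>2 / s)"
proof -
  define L where "L = lam / real n"
  define v where "v = L * (1 - 1 / c)"
  define d where "d = bh - b0"
  define a where "a = l1 (restr (supp b0) d)"
  define b where "b = l1 (restr (- supp b0) d)"
  have s: "s > 0" using T by (simp add: s_def card_gt_0_iff)
  have C: "C > 1" using c by (simp add: C_def)
  have L: "L > 0" using n lam_pos by (simp add: L_def)
  have v: "v > 0" and vC: "v * (1 + C) = 2 * L"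
    using c L by (simp_all add: v_def C_def field_simps)
  have \<epsilon>: "1 / (U * s) \<ge> 0" using U C s by simp
  have r: "r \<ge> 0" by (simp add: r_def En_nonneg)
  have a: "a \<ge> 0" and b: "b \<ge> 0" by (simp_all add: a_def b_def l1_nonneg)
  have "(norm2n n x d)\<^sup>2 \<le> 2 * r * norm2n n x d + v * (C * a - b)"
    using lasso_cone_inequality[OF lasso model n c lam, of b0]
    by (simp add: r_def L_def v_def C_def a_def b_def d_def)
  note cone = cone_inequality_consequences[OF this v b]
  have "a\<^sup>2 / s - (a\<^sup>2 + 2 * a * b) / (U * s) \<le> (norm2n n x d)\<^sup>2"
    using norm2n_power2_ge_coherence[OF normalized coherent \<epsilon>, of "supp b0" d]
    by (simp add: a_def b_def s_def)
  then have "(a + b) / (U * s) \<le> L * (6 * C / (U - 5 * C)) + 6 * C / (U - 5 * C) * (r / sqrt s)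
                                   + 4 * C / U * (1 / L) * (r\<^sup>2 / s)"
    using order_trans[OF l1_error_le_of_cone_and_coherence coherence_error_terms_le[OF s C U v vC r]]
      s C U v a r cone by simp
  moreover have "1 / (U * s) * l1 d = (a + b) / (U * s)"
    using l1_restr_Compl[of d "supp b0"] by (simp add: a_def b_def)
  moreover have "\<bar>En n (\<lambda>i. x i $ j * eps i)\<bar> \<le> L / 2"
  proof -
    have "lam / (2 * c * real n) \<le> lam / (2 * real n)"
      using c n lam_pos by (intro divide_left_mono) auto
    then show ?thesis using noise_correlation_le[OF lam _ n, of j] c by (simp add: L_def)
  qed
  moreover have "\<bar>d $ j\<bar> \<le> L / 2 + \<bar>En n (\<lambda>i. x i $ j * eps i)\<bar> + min (\<sigma> / sqrt (real n)) r
                     + 1 / (U * s) * l1 d"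
    using lasso_coordinate_error_le_l1[OF lasso model orac \<sigma> _ normalized coherent \<epsilon>, of j] lam_pos
    by (simp add: L_def r_def d_def)
  moreover have "L + L * (6 * C / (U - 5 * C)) = L * ((U + C) / (U - 5 * C))"
    using U by (simp add: field_simps)
  ultimately have "\<bar>d $ j\<bar> \<le> L * ((U + C) / (U - 5 * C)) + min (\<sigma> / sqrt (real n)) r
                       + 6 * C / (U - 5 * C) * (r / sqrt s) + 4 * C / U * (1 / L) * (r\<^sup>2 / s)"
    by linarith
  then show ?thesis by (simp add: L_def d_def)
qed

theorem lemma3:
  fixes n :: nat and x :: "nat \<Rightarrow> real^'p" and f y eps :: "nat \<Rightarrow> real"
    and \<sigma> K lam c :: real and b0 bh :: "real^'p"
  assumes n_pos: "n \<ge> 1" and sigma_pos: "\<sigma> > 0"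
    and model: "\<forall>i<n. y i = f i + eps i"
    and const: "\<exists>j0. \<forall>i<n. x i $ j0 = 1"
    and normalized: "\<forall>j. En n (\<lambda>i. (x i $ j)\<^sup>2) = 1"
    and orac: "oracsol n x f \<sigma> b0"
    and T_ne: "supp b0 \<noteq> {}"
    and cs_bound: "sqrt (En n (\<lambda>i. (f i - x i \<bullet> b0)\<^sup>2)) \<le> K * \<sigma> * sqrt (real (l0 b0) / real n)"
    and lam_pos: "lam > 0"
    and lasso: "lasso_sol n x y lam bh"
    and c_gt: "c > 1"
  defines "T \<equiv> supp b0"
    and "s \<equiv> real (card (supp b0))"
    and "Th \<equiv> supp bh"
    and "cs \<equiv> sqrt (En n (\<lambda>i. (f i - x i \<bullet> b0)\<^sup>2))"
    and "S \<equiv> (\<chi> j. 2 * En n (\<lambda>i. x i $ j * eps i))"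
    and "\<zeta> \<equiv> Max (range (\<lambda>j. \<bar>bh $ j - b0 $ j\<bar>))"
    and "mh \<equiv> card (supp bh - supp b0)"
    and "cb \<equiv> (c + 1) / (c - 1)"
  shows
    "(\<forall>t. t \<ge> \<zeta> \<and> Min ((\<lambda>j. \<bar>b0 $ j\<bar>) ` T) > \<zeta> + t
          \<longrightarrow> T \<subseteq> Th \<and> T = {j. \<bar>bh $ j\<bar> > t})
     \<and> (lam \<ge> c * real n * linf S \<and> RE n x T cb > 0 \<and> SE n x T mh > 0
          \<longrightarrow> \<zeta> \<le> (1 + 1 / c) * lam * sqrt s / (real n * RE n x T cb * SE n x T mh)
                    + 2 * cs / SE n x T mh)
     \<and> (\<forall>U. lam \<ge> c * real n * linf S \<and> U > 5 * cb
          \<and> (\<forall>j k. j \<noteq> k \<longrightarrow> \<bar>En n (\<lambda>i. x i $ j * x i $ k)\<bar> \<le> 1 / (U * s))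
          \<longrightarrow> \<zeta> \<le> lam / real n * ((U + cb) / (U - 5 * cb))
                    + min (\<sigma> / sqrt (real n)) cs
                    + 6 * cb / (U - 5 * cb) * (cs / sqrt s)
                    + 4 * cb / U * (real n / lam) * (cs\<^sup>2 / s))"
proof -
  have err: "\<bar>bh $ j - b0 $ j\<bar> \<le> \<zeta>" for j
    unfolding \<zeta>_def by (rule Max_ge) auto
  have \<zeta>_le: "\<zeta> \<le> B" if "\<And>j. \<bar>bh $ j - b0 $ j\<bar> \<le> B" for B
    unfolding \<zeta>_def using that by (auto intro: Max.boundedI)
  have "T \<subseteq> Th \<and> T = {j. \<bar>bh $ j\<bar> > t}"
    if "t \<ge> \<zeta>" and "Min ((\<lambda>j. \<bar>b0 $ j\<bar>) ` T) > \<zeta> + t" for t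
    using supp_eq_threshold[OF err that[unfolded T_def]] by (simp add: T_def Th_def)
  moreover have "\<zeta> \<le> (1 + 1 / c) * lam * sqrt s / (real n * RE n x T cb * SE n x T mh) + 2 * cs / SE n x T mh"
    if "lam \<ge> c * real n * linf S" and "RE n x T cb > 0" and "SE n x T mh > 0"
    unfolding T_def s_def cs_def mh_def cb_def
    by (rule \<zeta>_le, rule lasso_coordinate_error_RE_SE[OF lasso model n_pos c_gt lam_pos])
      (use that in \<open>simp_all add: T_def s_def cs_def S_def mh_def cb_def\<close>)
  moreover have "\<zeta> \<le> lam / real n * ((U + cb) / (U - 5 * cb)) + min (\<sigma> / sqrt (real n)) cs
                   + 6 * cb / (U - 5 * cb) * (cs / sqrt s) + 4 * cb / U * (real n / lam) * (cs\<^sup>2 / s)"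
    if "lam \<ge> c * real n * linf S" and "U > 5 * cb"
      and "\<forall>j k. j \<noteq> k \<longrightarrow> \<bar>En n (\<lambda>i. x i $ j * x i $ k)\<bar> \<le> 1 / (U * s)" for U
    unfolding s_def cs_def cb_def
    by (rule \<zeta>_le, rule lasso_coordinate_error_coherence[OF lasso model orac less_imp_le[OF sigma_pos]
        n_pos c_gt lam_pos _ normalized T_ne])
      (use that in \<open>simp_all add: s_def cs_def S_def cb_def\<close>)
  ultimately show ?thesis by (intro conjI allI impI) auto
qed

end
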